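(* Let $e$ be an edge of $\mathcal{G}$ such that $v=s(e)$ satisfies $0<|s^{-1}(v)|<\infty$. If $\pi(p_A)(h)=0$ for each $A\in\mathcal{G}^0$ and each $h\in B\setminus B_A$, then $\pi(s_e^* )(h)=0$ for each $h\in B\setminus B_e$. Consequently, if $\mathcal{G}$ has no infinite emitters, the hypothesis "$\pi(s_e^* )(h)=0$ for each edge $e$ and each $h\in B\setminus B_e$" is implied by the hypothesis "$\pi(p_A)(h)=0$ for each $A\in\mathcal{G}^0$ and $h\in B\setminus B_A$".
   Context: Let $\mathcal{G}=(G^0,\mathcal{G}^1,r,s)$ be an ultragraph (sets $G^0$ of vertices and $\mathcal{G}^1$ of edges, $s:\mathcal{G}^1\to G^0$, $r:\mathcal{G}^1\to P(G^0)\setminus\{\emptyset\}$), and let $\mathcal{G}^0$ be the smallest subset of $P(G^0)$ containing all singletons $\{v\}$, all $r(e)$, and closed under finite unions and intersections. Let $R$ be a unital commutative ring and $L_R(\mathcal{G})$ the ultragraph Leavitt path algebra, generated by $\{s_e,s_e^*:e\in\mathcal{G}^1\}\cup\{p_A:A\in\mathcal{G}^0\}$ with relations $p_\emptyset=0$, $p_Ap_B=p_{A\cap B}$, $p_{A\cup B}=p_A+p_B-p_{A\cap B}$; $p_{s(e)}s_e=s_ep_{r(e)}=s_e$, $p_{r(e)}s_e^*=s_e^*p_{s(e)}=s_e^*$; $s_e^*s_f=\delta_{e,f}p_{r(e)}$; and $p_v=\sum_{s(e)=v}s_es_e^*$ whenever $0<|s^{-1}(v)|<\infty$. Let $N$ be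 an $R$-module and $\pi:L_R(\mathcal{G})\to Hom_R(N)$ an $R$-algebra homomorphism. Set $N_e=\pi(s_es_e^* )(N)$ for $e\in\mathcal{G}^1$ and $N_A=\pi(p_A)(N)$ for $A\in\mathcal{G}^0$. Suppose $\pi$ is permutative, i.e. there are bases $B$ of $N$, $B_v$ of $N_v$, $B_{r(e)}$ of $N_{r(e)}$ and $B_e$ of $N_e$ ($v\in G^0$, $e\in\mathcal{G}^1$) with $B_v\subseteq B$, $B_{r(e)}\subseteq B$, $B_v\subseteq B_{r(e)}$ for $v\in r(e)$, $B_e\subseteq B_{s(e)}$, and $\pi(s_e)(B_{r(e)})=B_e$. For $A\in\mathcal{G}^0$ written as $A=\big(\bigcap_{e\in X_1}r(e)\big)\cup\dots\cup\big(\bigcap_{e\in X_n}r(e)\big)\cup F$ with $X_i\subseteq\mathcal{G}^1$ and $F\subseteq G^0$ finite, set $B_A=\big(\bigcap_{e\in X_1}B_{r(e)}\big)\cup\dots\cup\big(\bigcap_{e\in X_n}B_{r(e)}\big)\cup\bigcup_{v\in F}B_v$; this is well defined and is a basis of $N_A$. *)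

theory Defs
  imports Complex_Main
begin

text \<open>An ultragraph is given by s :: 'e => 'v and r :: 'e => 'v set with r e nonempty.\<close>

inductive_set G0 :: "('e \<Rightarrow> 'v set) \<Rightarrow> 'v set set" for r :: "'e \<Rightarrow> 'v set" where
  sing: "{v} \<in> G0 r"
| rng: "r e \<in> G0 r"
| un: "A \<in> G0 r \<Longrightarrow> B \<in> G0 r \<Longrightarrow> A \<union> B \<in> G0 r"
| int: "A \<in> G0 r \<Longrightarrow> B \<in> G0 r \<Longrightarrow> A \<inter> B \<in> G0 r"

text \<open>An R-algebra homomorphism pi from L_R(G) into Hom_R(N) is the same thing as a family of
  R-linear endomorphisms of N (images of the generators p_A, s_e, s_e^* ) satisfying the
  defining relations of L_R(G) (universal property). P A = pi(p_A), S e = pi(s_e),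
  Ss e = pi(s_e^* ).\<close>

definition ulpa_rep ::
  "('r::comm_ring_1 \<Rightarrow> 'n::ab_group_add \<Rightarrow> 'n) \<Rightarrow> ('e \<Rightarrow> 'v) \<Rightarrow> ('e \<Rightarrow> 'v set)
   \<Rightarrow> ('v set \<Rightarrow> 'n \<Rightarrow> 'n) \<Rightarrow> ('e \<Rightarrow> 'n \<Rightarrow> 'n) \<Rightarrow> ('e \<Rightarrow> 'n \<Rightarrow> 'n) \<Rightarrow> bool" where
  "ulpa_rep sc s r P S Ss \<longleftrightarrow>
     (\<forall>A\<in>G0 r. module_hom sc sc (P A)) \<and>
     (\<forall>e. module_hom sc sc (S e) \<and> module_hom sc sc (Ss e)) \<and>
     P {} = (\<lambda>_. 0) \<and>
     (\<forall>A\<in>G0 r. \<forall>B\<in>G0 r. P A \<circ> P B = P (A \<inter> B)) \<and>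
     (\<forall>A\<in>G0 r. \<forall>B\<in>G0 r. P (A \<union> B) = (\<lambda>x. P A x + P B x - P (A \<inter> B) x)) \<and>
     (\<forall>e. P {s e} \<circ> S e = S e \<and> S e \<circ> P (r e) = S e \<and>
          P (r e) \<circ> Ss e = Ss e \<and> Ss e \<circ> P {s e} = Ss e) \<and>
     (\<forall>e f. Ss e \<circ> S f = (if e = f then P (r e) else (\<lambda>_. 0))) \<and>
     (\<forall>v. s -` {v} \<noteq> {} \<and> finite (s -` {v}) \<longrightarrow>
          P {v} = (\<lambda>x. \<Sum>e\<in>s -` {v}. S e (Ss e x)))"

definition is_basis_of :: "('r::comm_ring_1 \<Rightarrow> 'n::ab_group_add \<Rightarrow> 'n) \<Rightarrow> 'n set \<Rightarrow> 'n set \<Rightarrow> bool" where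
  "is_basis_of sc X M \<longleftrightarrow> \<not> module.dependent sc X \<and> module.span sc X = M"

text \<open>N_v = range (P {v}), N_{r(e)} = range (P (r e)), N_e = range (S e o Ss e).\<close>

definition permutative ::
  "('r::comm_ring_1 \<Rightarrow> 'n::ab_group_add \<Rightarrow> 'n) \<Rightarrow> ('e \<Rightarrow> 'v) \<Rightarrow> ('e \<Rightarrow> 'v set)
   \<Rightarrow> ('v set \<Rightarrow> 'n \<Rightarrow> 'n) \<Rightarrow> ('e \<Rightarrow> 'n \<Rightarrow> 'n) \<Rightarrow> ('e \<Rightarrow> 'n \<Rightarrow> 'n)
   \<Rightarrow> 'n set \<Rightarrow> ('v \<Rightarrow> 'n set) \<Rightarrow> ('e \<Rightarrow> 'n set) \<Rightarrow> ('e \<Rightarrow> 'n set) \<Rightarrow> bool" where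
  "permutative sc s r P S Ss B Bv Br Be \<longleftrightarrow>
     is_basis_of sc B UNIV \<and>
     (\<forall>v. is_basis_of sc (Bv v) (range (P {v})) \<and> Bv v \<subseteq> B) \<and>
     (\<forall>e. is_basis_of sc (Br e) (range (P (r e))) \<and> Br e \<subseteq> B) \<and>
     (\<forall>e. \<forall>v\<in>r e. Bv v \<subseteq> Br e) \<and>
     (\<forall>e. is_basis_of sc (Be e) (range (\<lambda>x. S e (Ss e x))) \<and> Be e \<subseteq> Bv (s e)) \<and>
     (\<forall>e. S e ` Br e = Be e)"

text \<open>BA_rep r Bv Br A X: X is the set B_A computed from some representation
  A = (Inter_{e in X_1} r e) Un ... Un (Inter_{e in X_n} r e) Un F
  (X_i finite nonempty sets of edges, F finite set of vertices) as
  X = (Inter_{e in X_1} B_{r(e)}) Un ... Un (Inter_{e in X_n} B_{r(e)}) Un Union_{v in F} B_v.\<close>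

definition BA_rep :: "('e \<Rightarrow> 'v set) \<Rightarrow> ('v \<Rightarrow> 'n set) \<Rightarrow> ('e \<Rightarrow> 'n set) \<Rightarrow> 'v set \<Rightarrow> 'n set \<Rightarrow> bool" where
  "BA_rep r Bv Br A X \<longleftrightarrow>
     (\<exists>(n::nat) Xs F. finite F \<and> (\<forall>i<n. finite (Xs i) \<and> Xs i \<noteq> {}) \<and>
        A = (\<Union>i<n. \<Inter>e\<in>Xs i. r e) \<union> F \<and>
        X = (\<Union>i<n. \<Inter>e\<in>Xs i. Br e) \<union> (\<Union>v\<in>F. Bv v))"

end

theory Submission imports Defs begin

text \<open>Let v = s(e). Since s_e^* = s_e^* p_v, the hypothesis on p_v kills every basis vector
  outside B_v. A vector h in B_v is fixed by p_v, which is the sum of the s_g s_g^* over the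
  finitely many g with s(g) = v; so h lies in the span of the union of the B_g, a subset of the
  basis B, and linear independence forces h \<in> B_g for one such g. If h \<notin> B_e then g \<noteq> e,
  and s_e^* s_g = 0 annihilates h, which lies in the range of s_g s_g^*.\<close>

lemma ulpa_repD:
  assumes "ulpa_rep sc s r P S Ss"
  shows ulpa_rep_adjoint_hom: "module_hom sc sc (Ss e)"
    and ulpa_rep_adjoint_source: "Ss e \<circ> P {s e} = Ss e"
    and ulpa_rep_proj_idem: "P {v} \<circ> P {v} = P {v}"
    and ulpa_rep_adjoint_orthogonal: "e \<noteq> f \<Longrightarrow> Ss e \<circ> S f = (\<lambda>_. 0)"
    and ulpa_rep_vertex_sum:
      "s -` {v} \<noteq> {} \<Longrightarrow> finite (s -` {v}) \<Longrightarrow> P {v} = (\<lambda>x. \<Sum>g\<in>s -` {v}. S g (Ss g x))"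
  using assms G0.sing[of v r] unfolding ulpa_rep_def by (auto simp: fun_eq_iff)

lemma permutativeD:
  assumes "permutative sc s r P S Ss B Bv Br Be"
  shows permutative_basis: "is_basis_of sc B UNIV"
    and permutative_vertex_basis: "is_basis_of sc (Bv v) (range (P {v}))" "Bv v \<subseteq> B"
    and permutative_edge_basis:
      "is_basis_of sc (Be e) (range (\<lambda>x. S e (Ss e x)))" "Be e \<subseteq> Bv (s e)"
  using assms unfolding permutative_def by auto

lemma basis_of_subset:
  assumes "module sc" "is_basis_of sc X M"
  shows "X \<subseteq> M"
  using assms module.span_superset unfolding is_basis_of_def by blast

lemma (in module) independent_mem_span_subset:
  assumes "independent B" "b \<in> B" "C \<subseteq> B" "b \<in> span C"
  shows "b \<in> C"
proof -
  have "insert b C = C"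
  proof (rule spanning_subset_independent)
    show "independent (insert b C)"
      using assms independent_mono[of B "insert b C"] by blast
    show "insert b C \<subseteq> span C"
      using assms(4) span_superset by blast
  qed auto
  then show ?thesis by blast
qed

lemma BA_rep_singleton: "BA_rep r Bv Br {v} (Bv v)"
  unfolding BA_rep_def by (rule exI[of _ 0]) auto

lemma vertex_basis_in_edge_bases:
  assumes M: "module sc"
    and U: "ulpa_rep sc s r P S Ss"
    and Pm: "permutative sc s r P S Ss B Bv Br Be"
    and regular: "s -` {v} \<noteq> {}" "finite (s -` {v})"
    and h: "h \<in> Bv v"
  shows "\<exists>g. s g = v \<and> h \<in> Be g"
proof -
  let ?C = "\<Union>g\<in>s -` {v}. Be g"
  have "h \<in> range (P {v})"
    using h basis_of_subset[OF M permutative_vertex_basis(1)[OF Pm]] by blast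
  then have "h = P {v} h"
    using ulpa_rep_proj_idem[OF U] by (metis comp_apply rangeE)
  also have "\<dots> = (\<Sum>g\<in>s -` {v}. S g (Ss g h))"
    by (simp add: ulpa_rep_vertex_sum[OF U regular])
  also have "\<dots> \<in> module.span sc ?C"
  proof (rule module.span_sum[OF M])
    fix g assume g: "g \<in> s -` {v}"
    have "S g (Ss g h) \<in> module.span sc (Be g)"
      using permutative_edge_basis(1)[OF Pm] unfolding is_basis_of_def by blast
    moreover have "module.span sc (Be g) \<subseteq> module.span sc ?C"
      using g by (intro module.span_mono[OF M]) blast
    ultimately show "S g (Ss g h) \<in> module.span sc ?C" by blast
  qed
  finally have "h \<in> module.span sc ?C" .
  moreover have "?C \<subseteq> B"
    using permutative_edge_basis(2)[OF Pm] permutative_vertex_basis(2)[OF Pm] by blast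
  moreover have "h \<in> B"
    using h permutative_vertex_basis(2)[OF Pm] by blast
  moreover have "\<not> module.dependent sc B"
    using permutative_basis[OF Pm] unfolding is_basis_of_def by blast
  ultimately have "h \<in> ?C"
    using module.independent_mem_span_subset[OF M] by metis
  then show ?thesis by blast
qed

lemma adjoint_vanishes_off_edge_basis:
  assumes M: "module sc"
    and U: "ulpa_rep sc s r P S Ss"
    and Pm: "permutative sc s r P S Ss B Bv Br Be"
    and hyp: "\<forall>A\<in>G0 r. \<forall>X. BA_rep r Bv Br A X \<longrightarrow> (\<forall>h\<in>B - X. P A h = 0)"
    and regular: "s -` {s e} \<noteq> {}" "finite (s -` {s e})"
    and h: "h \<in> B - Be e"
  shows "Ss e h = 0"
proof (cases "h \<in> Bv (s e)")
  case False
  with h have "P {s e} h = 0"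
    using hyp G0.sing[of "s e" r] BA_rep_singleton[of r Bv Br "s e"] by blast
  then have "Ss e h = Ss e 0"
    using ulpa_rep_adjoint_source[OF U] by (metis comp_apply)
  then show ?thesis
    using module_hom.zero[OF ulpa_rep_adjoint_hom[OF U]] by simp
next
  case True
  then obtain g where g: "s g = s e" "h \<in> Be g"
    using vertex_basis_in_edge_bases[OF M U Pm regular] by blast
  then have "h \<in> range (\<lambda>x. S g (Ss g x))"
    using basis_of_subset[OF M permutative_edge_basis(1)[OF Pm]] by blast
  then obtain x where "h = S g (Ss g x)" by blast
  moreover have "g \<noteq> e"
    using g h by blast
  ultimately show ?thesis
    using ulpa_rep_adjoint_orthogonal[OF U, of e g] by (metis comp_apply)
qed

theorem mainTheorem9:
  fixes sc :: "'r::comm_ring_1 \<Rightarrow> 'n::ab_group_add \<Rightarrow> 'n"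
    and s :: "'e \<Rightarrow> 'v" and r :: "'e \<Rightarrow> 'v set"
    and P :: "'v set \<Rightarrow> 'n \<Rightarrow> 'n" and S Ss :: "'e \<Rightarrow> 'n \<Rightarrow> 'n"
    and B :: "'n set" and Bv :: "'v \<Rightarrow> 'n set" and Br Be :: "'e \<Rightarrow> 'n set"
    and e :: 'e
  assumes "module sc"
    and "\<forall>f. r f \<noteq> {}"
    and "ulpa_rep sc s r P S Ss"
    and "permutative sc s r P S Ss B Bv Br Be"
    and hyp: "\<forall>A\<in>G0 r. \<forall>X. BA_rep r Bv Br A X \<longrightarrow> (\<forall>h\<in>B - X. P A h = 0)"
  shows "(s -` {s e} \<noteq> {} \<and> finite (s -` {s e}) \<longrightarrow> (\<forall>h\<in>B - Be e. Ss e h = 0))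
       \<and> ((\<forall>v. finite (s -` {v})) \<longrightarrow> (\<forall>f. \<forall>h\<in>B - Be f. Ss f h = 0))"
proof (intro conjI impI allI ballI)
  fix h assume "s -` {s e} \<noteq> {} \<and> finite (s -` {s e})" "h \<in> B - Be e"
  then show "Ss e h = 0"
    using adjoint_vanishes_off_edge_basis[OF assms(1,3,4) hyp] by blast
next
  fix f h assume "\<forall>v. finite (s -` {v})" "h \<in> B - Be f"
  moreover have "s -` {s f} \<noteq> {}" by blast
  ultimately show "Ss f h = 0"
    using adjoint_vanishes_off_edge_basis[OF assms(1,3,4) hyp] by blast
qed

end
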